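(* Let $\varphi(s,v)=\vec c(s)+v\vec q(s)$ be a developable timelike ruled surface of type $M^1_-$ in $\mathbb{R}^3_1$ and let the timelike ruled surface $\varphi^*(s,v)=\vec c(s)+R\vec a(s)+v\vec q^*(s)$ of type $M^1_+$ or $M^1_-$ be a Mannheim offset of $\varphi$, with $\theta$ the angle between $\vec q$ and $\vec q^*$. Let $\varphi_{h^*}$ and $\varphi_{a^*}$ be the trajectory ruled surfaces generated by $\vec h^*$ and $\vec a^*$. Then (a) $\varphi_{h^*}$ is nondevelopable; (b) $\varphi_{a^*}$ is developable if and only if $\sinh\theta+R\frac{ds_1}{ds}\kappa\cosh\theta=0$ when $\varphi^*$ is of type $M^1_+$, respectively $\cosh\theta+R\frac{ds_1}{ds}\kappa\sinh\theta=0$ when $\varphi^*$ is of type $M^1_-$.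
   Context: Work in Minkowski 3-space $\mathbb{R}^3_1$ with $\langle x,y\rangle=-x_1y_1+x_2y_2+x_3y_3$, $\|x\|=\sqrt{|\langle x,x\rangle|}$, and Lorentzian cross product $x\times y=(x_2y_3-x_3y_2,\,x_1y_3-x_3y_1,\,x_2y_1-x_1y_2)$. A ruled surface is $\varphi(s,v)=\vec c(s)+v\vec q(s)$ with $\vec q$ a unit non-null vector field, $\langle\vec q,\vec q\rangle=\varepsilon_2\in\{\pm1\}$, $d\vec q/ds$ non-null, $\vec c$ the striction curve ($\langle d\vec q/ds,d\vec c/ds\rangle=0$) and $s$ the arc length of $\vec c$. Its Frenet frame $\{\vec q,\vec h,\vec a\}$ has central normal $\vec h=\frac{d\vec q/ds}{\|d\vec q/ds\|}$ and asymptotic normal $\vec a=\frac{(d\vec q/ds)\times\vec q}{\|d\vec q/ds\|}$. Type $M^1_-$: $\vec q$ timelike, $\vec h$ spacelike; type $M^1_+$: $\vec q$, $\vec h$ spacelike. Let $s_1$ be the arc length of the spherical image of $\vec q$ and $\kappa$ the conical curvature of the directing cone, so that for these types $d\vec q/ds_1=\vec h$, $d\vec h/ds_1=-\varepsilon_2\vec q+\kappa\vec a$, $d\vec a/ds_1=\varepsilon_2\kappa\vec h$. A ruled surface $\psi(s,v)=\vec b(s)+v\vec e(s)$ has distribution parameter $\det(d\vec b/ds,\vec e,d\vec e/ds)/\langle d\vec e/ds,d\vec e/ds\rangle$ and is developable iff it vanishes identically. A ruled surface $\varphi^*(s,v)=\vec c^*(s)+v\vec q^*(s)$ with Frenet frame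 $\{\vec q^*,\vec h^*,\vec a^*\}$ is a Mannheim offset of $\varphi$ if its rulings correspond one-to-one with those of $\varphi$ and $\vec h^*=\vec a$; then $\vec c^*=\vec c+R\vec a$ with $R$ constant since $\varphi$ is developable. With $\theta$ the angle between $\vec q$ and $\vec q^*$: if $\varphi^*$ is of type $M^1_+$, $\vec q^*=\sinh\theta\,\vec q+\cosh\theta\,\vec h$, $\vec a^*=\cosh\theta\,\vec q+\sinh\theta\,\vec h$; if of type $M^1_-$, $\vec q^*=\cosh\theta\,\vec q+\sinh\theta\,\vec h$, $\vec a^*=\sinh\theta\,\vec q+\cosh\theta\,\vec h$. The trajectory ruled surfaces are $\varphi_{h^*}(s,v)=\vec c^*(s)+v\vec h^*(s)$ and $\varphi_{a^*}(s,v)=\vec c^*(s)+v\vec a^*(s)$. *)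

theory Defs
  imports "HOL-Analysis.Analysis"
begin

definition minner :: "real^3 \<Rightarrow> real^3 \<Rightarrow> real" where
  "minner x y = - x$1 * y$1 + x$2 * y$2 + x$3 * y$3"

definition mnorm :: "real^3 \<Rightarrow> real" where
  "mnorm x = sqrt \<bar>minner x x\<bar>"

definition lcross :: "real^3 \<Rightarrow> real^3 \<Rightarrow> real^3" where
  "lcross x y = vector [x$2 * y$3 - x$3 * y$2, x$1 * y$3 - x$3 * y$1, x$2 * y$1 - x$1 * y$2]"

definition det3 :: "real^3 \<Rightarrow> real^3 \<Rightarrow> real^3 \<Rightarrow> real" where
  "det3 x y z = det (vector [x, y, z] :: real^3^3)"

text \<open>Distribution parameter of psi(s,v) = b(s) + v e(s) at s.\<close>
definition dparam :: "(real \<Rightarrow> real^3) \<Rightarrow> (real \<Rightarrow> real^3) \<Rightarrow> real \<Rightarrow> real" where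
  "dparam b e s =
     det3 (vector_derivative b (at s)) (e s) (vector_derivative e (at s)) /
     minner (vector_derivative e (at s)) (vector_derivative e (at s))"

definition developable_on :: "real set \<Rightarrow> (real \<Rightarrow> real^3) \<Rightarrow> (real \<Rightarrow> real^3) \<Rightarrow> bool" where
  "developable_on I b e \<longleftrightarrow> (\<forall>s\<in>I. dparam b e s = 0)"

text \<open>Standing setup: q unit non-null, dq/ds non-null, c striction curve, s arc length of c.\<close>
definition ruled_surface :: "real set \<Rightarrow> (real \<Rightarrow> real^3) \<Rightarrow> (real \<Rightarrow> real^3) \<Rightarrow> bool" where
  "ruled_surface I c q \<longleftrightarrow> (\<forall>s\<in>I.
      c differentiable (at s) \<and> q differentiable (at s) \<and>
      \<bar>minner (q s) (q s)\<bar> = 1 \<and>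
      minner (vector_derivative q (at s)) (vector_derivative q (at s)) \<noteq> 0 \<and>
      minner (vector_derivative q (at s)) (vector_derivative c (at s)) = 0 \<and>
      mnorm (vector_derivative c (at s)) = 1)"

definition central_normal :: "(real \<Rightarrow> real^3) \<Rightarrow> real \<Rightarrow> real^3" where
  "central_normal q s = (1 / mnorm (vector_derivative q (at s))) *\<^sub>R vector_derivative q (at s)"

definition asymptotic_normal :: "(real \<Rightarrow> real^3) \<Rightarrow> real \<Rightarrow> real^3" where
  "asymptotic_normal q s =
     (1 / mnorm (vector_derivative q (at s))) *\<^sub>R lcross (vector_derivative q (at s)) (q s)"

definition type_M1_minus :: "real set \<Rightarrow> (real \<Rightarrow> real^3) \<Rightarrow> (real \<Rightarrow> real^3) \<Rightarrow> bool" where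
  "type_M1_minus I c q \<longleftrightarrow> ruled_surface I c q \<and>
     (\<forall>s\<in>I. minner (q s) (q s) = -1 \<and> minner (central_normal q s) (central_normal q s) > 0)"

end

theory Submission
  imports Defs
begin

text \<open>
  Along a developable ruled surface of type \<open>M\<^sup>1\<^sub>-\<close> the striction curve is tangent to the
  ruling, \<open>c' = q\<close>, so the striction curve of the offset satisfies
  \<open>(c + R a)' = q - R s\<^sub>1' \<kappa> h\<close>.  The directions \<open>q\<^sup>*\<close> and \<open>a\<^sup>*\<close> are hyperbolic rotations
  \<open>f(\<theta>) q + g(\<theta>) h\<close> and \<open>g(\<theta>) q + f(\<theta>) h\<close> with \<open>(f, g) = (sinh, cosh)\<close> or \<open>(cosh, sinh)\<close>;
  the Mannheim condition \<open>h\<^sup>* = a\<close> forces \<open>\<theta>' = -s\<^sub>1'\<close> and \<open>g(\<theta>) s\<^sub>1' \<kappa> \<noteq> 0\<close>.  Hence \<open>a\<^sup>*\<close> is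
  parallel to \<open>a\<close>, and both distribution parameters become explicit in the frame
  \<open>{q, h, a}\<close>: \<open>1 / (s\<^sub>1' \<kappa>)\<close> for \<open>h\<^sup>* = a\<close> and \<open>(f + R s\<^sub>1' \<kappa> g) / (f s\<^sub>1' \<kappa>)\<close> for \<open>a\<^sup>*\<close>.
\<close>

lemma vec3_eq_iff: "(x::real^3) = y \<longleftrightarrow> x$1 = y$1 \<and> x$2 = y$2 \<and> x$3 = y$3"
  by (metis (mono_tags, lifting) exhaust_3 vec_eq_iff)

lemma lcross_nth:
  "lcross x y $ 1 = x$2 * y$3 - x$3 * y$2"
  "lcross x y $ 2 = x$1 * y$3 - x$3 * y$1"
  "lcross x y $ 3 = x$2 * y$1 - x$1 * y$2"
  unfolding lcross_def by simp_all

lemma lcross_scaleR_left: "lcross (r *\<^sub>R x) y = r *\<^sub>R lcross x y"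
  unfolding vec3_eq_iff by (simp add: lcross_nth algebra_simps)

lemma det3_expand:
  "det3 x y z = x$1*(y$2*z$3 - y$3*z$2) - x$2*(y$1*z$3 - y$3*z$1) + x$3*(y$1*z$2 - y$2*z$1)"
  unfolding det3_def det_3 by (simp add: algebra_simps)

lemma minner_scaleR [simp]:
  "minner (r *\<^sub>R x) y = r * minner x y" "minner x (r *\<^sub>R y) = r * minner x y"
  unfolding minner_def by (simp_all add: algebra_simps)

lemma minner_minus [simp]: "minner (- x) y = - minner x y" "minner x (- y) = - minner x y"
  unfolding minner_def by (simp_all add: algebra_simps)

lemma minner_commute: "minner x y = minner y x"
  unfolding minner_def by (simp add: algebra_simps)

lemma lcross_timelike_frame:
  assumes "minner Q Q = -1" "minner H H = 1" "minner Q H = 0"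
  shows "minner (lcross H Q) (lcross H Q) = 1" "minner (lcross H Q) Q = 0"
    "minner (lcross H Q) H = 0" "det3 Q H (lcross H Q) = 1"
  using assms unfolding minner_def lcross_nth det3_expand by algebra+

lemma timelike_frame_expansion:
  assumes "minner Q Q = -1" "minner H H = 1" "minner Q H = 0"
  shows "X = (- minner X Q) *\<^sub>R Q + minner X H *\<^sub>R H + minner X (lcross H Q) *\<^sub>R lcross H Q"
  using assms unfolding vec3_eq_iff minner_def by (simp add: lcross_nth; algebra)

lemma minner_frame_combination:
  assumes "minner Q Q = -1" "minner H H = 1" "minner Q H = 0"
    "minner A A = 1" "minner A Q = 0" "minner A H = 0"
  shows "minner (x *\<^sub>R Q + y *\<^sub>R H + z *\<^sub>R A) Q = - x"
    "minner (x *\<^sub>R Q + y *\<^sub>R H + z *\<^sub>R A) H = y"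
    "minner (x *\<^sub>R Q + y *\<^sub>R H + z *\<^sub>R A) A = z"
  using assms unfolding minner_def by (simp_all; algebra)+

lemma det3_frame_combination:
  "det3 (x1 *\<^sub>R Q + y1 *\<^sub>R H + z1 *\<^sub>R A) (x2 *\<^sub>R Q + y2 *\<^sub>R H + z2 *\<^sub>R A)
        (x3 *\<^sub>R Q + y3 *\<^sub>R H + z3 *\<^sub>R A)
   = (x1*(y2*z3 - z2*y3) - y1*(x2*z3 - z2*x3) + z1*(x2*y3 - y2*x3)) * det3 Q H A"
  unfolding det3_expand by simp algebra

lemma has_vector_derivative_nth:
  assumes "(x has_vector_derivative x') (at s)"
  shows "((\<lambda>t. x t $ i) has_real_derivative x' $ i) (at s)"
  using bounded_linear.has_vector_derivative[OF bounded_linear_vec_nth assms, of i]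
  unfolding has_real_derivative_iff_has_vector_derivative .

lemma minner_self_has_derivative:
  assumes "(x has_vector_derivative x') (at s)"
  shows "((\<lambda>t. minner (x t) (x t)) has_real_derivative 2 * minner (x s) x') (at s)"
proof -
  note nth = has_vector_derivative_nth[OF assms]
  show ?thesis unfolding minner_def
    by (rule derivative_eq_intros nth refl | simp add: algebra_simps)+
qed

lemma vector_derivative_cong_open:
  assumes "open I" "s \<in> I" "\<And>x. x \<in> I \<Longrightarrow> y x = z x"
  shows "vector_derivative y (at s) = vector_derivative z (at s)"
  unfolding vector_derivative_def
  using has_vector_derivative_transform_within_open[OF _ assms(1,2)] assms(2,3) by metis

lemma dparam_cong_open:
  assumes "open I" "s \<in> I" "\<And>x. x \<in> I \<Longrightarrow> e x = e' x"
  shows "dparam b e s = dparam b e' s"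
  unfolding dparam_def using vector_derivative_cong_open[OF assms] assms(2,3) by simp

text \<open>Coefficients of the hyperbolic rotations \<open>f(\<theta>) q + g(\<theta>) h\<close>; the instances needed are
  \<open>(sinh, cosh)\<close> and \<open>(cosh, sinh)\<close>.\<close>
definition hyperbolic_pair :: "(real \<Rightarrow> real) \<Rightarrow> (real \<Rightarrow> real) \<Rightarrow> bool" where
  "hyperbolic_pair f g \<longleftrightarrow> (\<forall>x. (f has_real_derivative g x) (at x) \<and>
     (g has_real_derivative f x) (at x) \<and> (f x)\<^sup>2 \<noteq> (g x)\<^sup>2)"

lemma hyperbolic_pair_commute: "hyperbolic_pair f g \<longleftrightarrow> hyperbolic_pair g f"
  unfolding hyperbolic_pair_def by metis

lemma hyperbolic_pair_sinh_cosh: "hyperbolic_pair sinh cosh"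
  unfolding hyperbolic_pair_def
  by (auto intro: has_field_derivative_sinh[OF DERIV_ident, simplified]
      has_field_derivative_cosh[OF DERIV_ident, simplified] simp: cosh_square_eq)

lemma hyperbolic_pair_cosh_sinh: "hyperbolic_pair cosh sinh"
  using hyperbolic_pair_sinh_cosh hyperbolic_pair_commute by blast

locale developable_M1_minus =
  fixes I :: "real set" and c q :: "real \<Rightarrow> real^3" and \<kappa> s1 :: "real \<Rightarrow> real"
  assumes open_I: "open I"
    and type_M1_minus: "type_M1_minus I c q"
    and developable: "developable_on I c q"
    and orient: "\<forall>s\<in>I. minner (vector_derivative c (at s)) (q s) < 0"
    and s1: "\<forall>s\<in>I. (s1 has_real_derivative mnorm (vector_derivative q (at s))) (at s)"
    and frenet_h: "\<forall>s\<in>I. (central_normal q has_vector_derivative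
                      deriv s1 s *\<^sub>R (q s + \<kappa> s *\<^sub>R asymptotic_normal q s)) (at s)"
    and frenet_a: "\<forall>s\<in>I. (asymptotic_normal q has_vector_derivative
                      deriv s1 s *\<^sub>R (- (\<kappa> s *\<^sub>R central_normal q s))) (at s)"
begin

abbreviation "h \<equiv> central_normal q"
abbreviation "a \<equiv> asymptotic_normal q"

lemma deriv_s1_eq: "s \<in> I \<Longrightarrow> deriv s1 s = mnorm (vector_derivative q (at s))"
  using s1 by (simp add: DERIV_imp_deriv)

lemma deriv_s1_pos: "s \<in> I \<Longrightarrow> deriv s1 s > 0"
  using type_M1_minus deriv_s1_eq
  unfolding type_M1_minus_def ruled_surface_def mnorm_def by simp

lemma q_has_derivative: "s \<in> I \<Longrightarrow> (q has_vector_derivative deriv s1 s *\<^sub>R h s) (at s)"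
  using type_M1_minus deriv_s1_pos[of s] deriv_s1_eq[of s]
  by (simp add: type_M1_minus_def ruled_surface_def central_normal_def vector_derivative_works)

lemma q_timelike: "s \<in> I \<Longrightarrow> minner (q s) (q s) = -1"
  using type_M1_minus unfolding type_M1_minus_def by blast

lemma h_unit: "s \<in> I \<Longrightarrow> minner (h s) (h s) = 1"
proof -
  assume s: "s \<in> I"
  define P where "P = vector_derivative q (at s)"
  have "minner (h s) (h s) = minner P P / \<bar>minner P P\<bar>"
    unfolding central_normal_def mnorm_def P_def by simp
  moreover have "minner (h s) (h s) > 0"
    using type_M1_minus s unfolding type_M1_minus_def by blast
  ultimately have "minner P P > 0"
    by (simp add: zero_less_divide_iff)
  with \<open>minner (h s) (h s) = minner P P / \<bar>minner P P\<bar>\<close> show ?thesis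
    by simp
qed

lemma q_orthogonal_h: "s \<in> I \<Longrightarrow> minner (q s) (h s) = 0"
proof -
  assume s: "s \<in> I"
  have "((\<lambda>t. minner (q t) (q t)) has_real_derivative 2 * deriv s1 s * minner (q s) (h s)) (at s)"
    using minner_self_has_derivative[OF q_has_derivative[OF s]] by (simp add: mult.assoc)
  then have "((\<lambda>t. -1) has_real_derivative 2 * deriv s1 s * minner (q s) (h s)) (at s)"
    by (rule has_field_derivative_transform_within_open[OF _ open_I s]) (simp_all add: q_timelike)
  then have "2 * deriv s1 s * minner (q s) (h s) = 0"
    using DERIV_unique DERIV_const by blast
  then show ?thesis using deriv_s1_pos[OF s] by simp
qed

lemma a_eq_lcross: "s \<in> I \<Longrightarrow> a s = lcross (h s) (q s)"
  using deriv_s1_pos[of s] deriv_s1_eq[of s]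
  by (simp add: asymptotic_normal_def central_normal_def lcross_scaleR_left)

lemma frame_orthonormal:
  assumes "s \<in> I"
  shows "minner (q s) (q s) = -1" "minner (h s) (h s) = 1" "minner (q s) (h s) = 0"
    "minner (a s) (a s) = 1" "minner (a s) (q s) = 0" "minner (a s) (h s) = 0"
    "det3 (q s) (h s) (a s) = 1"
  using q_timelike h_unit q_orthogonal_h assms
    lcross_timelike_frame[OF q_timelike h_unit q_orthogonal_h, OF assms assms assms]
  by (auto simp: a_eq_lcross)

lemmas frame_coordinates = minner_frame_combination[OF frame_orthonormal(1-6)]

text \<open>Developability puts \<open>c'\<close> in the plane of \<open>q\<close> and \<open>q'\<close>, striction makes it orthogonal
  to \<open>q'\<close>, so \<open>c' = \<alpha> q\<close>; unit speed and the orientation hypothesis give \<open>\<alpha> = 1\<close>.\<close>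
lemma striction_tangent: "s \<in> I \<Longrightarrow> vector_derivative c (at s) = q s"
proof -
  assume s: "s \<in> I"
  define C where "C = vector_derivative c (at s)"
  define \<alpha> where "\<alpha> = - minner C (q s)"
  define \<gamma> where "\<gamma> = minner C (a s)"
  have P: "vector_derivative q (at s) = deriv s1 s *\<^sub>R h s"
    using q_has_derivative[OF s] by (rule vector_derivative_at)
  have "minner (vector_derivative q (at s)) C = 0" "mnorm C = 1"
    using type_M1_minus s unfolding type_M1_minus_def ruled_surface_def C_def by auto
  then have CH: "minner C (h s) = 0" and unit: "mnorm C = 1"
    using deriv_s1_pos[OF s] unfolding P by (auto simp: minner_commute)
  have C: "C = \<alpha> *\<^sub>R q s + 0 *\<^sub>R h s + \<gamma> *\<^sub>R a s"
    using timelike_frame_expansion[OF q_timelike h_unit q_orthogonal_h, OF s s s, of C] CH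
    unfolding \<alpha>_def \<gamma>_def a_eq_lcross[OF s] by simp
  have "dparam c q s = 0"
    using developable s unfolding developable_on_def by blast
  moreover have "minner (vector_derivative q (at s)) (vector_derivative q (at s)) \<noteq> 0"
    using type_M1_minus s unfolding type_M1_minus_def ruled_surface_def by blast
  ultimately have "det3 C (q s) (deriv s1 s *\<^sub>R h s) = 0"
    unfolding dparam_def C_def[symmetric] P by simp
  then have "deriv s1 s * det3 C (q s) (h s) = 0"
    unfolding det3_expand by (simp add: algebra_simps)
  moreover have "det3 C (q s) (h s) = \<gamma>"
    using det3_frame_combination[of \<alpha> "q s" 0 "h s" \<gamma> "a s" 1 0 0 0 1 0] frame_orthonormal(7)[OF s]
    unfolding C[symmetric] by simp
  ultimately have "C = \<alpha> *\<^sub>R q s"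
    using C deriv_s1_pos[OF s] by simp
  moreover have "\<alpha> > 0"
    using orient s unfolding \<alpha>_def C_def by simp
  moreover have "mnorm (\<alpha> *\<^sub>R q s) = \<bar>\<alpha>\<bar>"
    unfolding mnorm_def using q_timelike[OF s] by simp
  ultimately show ?thesis
    using unit unfolding C_def by simp
qed

lemma offset_striction_derivative:
  assumes s: "s \<in> I"
  shows "vector_derivative (\<lambda>s. c s + R *\<^sub>R a s) (at s) = q s - (R * deriv s1 s * \<kappa> s) *\<^sub>R h s"
proof -
  have "(c has_vector_derivative q s) (at s)"
    using type_M1_minus s striction_tangent[OF s] vector_derivative_works
    unfolding type_M1_minus_def ruled_surface_def by metis
  from has_vector_derivative_add[OF this has_vector_derivative_scaleR[OF DERIV_const]]
  have "((\<lambda>s. c s + R *\<^sub>R a s) has_vector_derivative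
          q s + (R *\<^sub>R (deriv s1 s *\<^sub>R - (\<kappa> s *\<^sub>R h s)) + 0 *\<^sub>R a s)) (at s)"
    using frenet_a s by blast
  then show ?thesis
    by (simp add: vector_derivative_at algebra_simps)
qed

lemma rotation_has_derivative:
  assumes fg: "hyperbolic_pair f g" and \<theta>: "(\<theta> has_real_derivative t) (at s)" and s: "s \<in> I"
  shows "((\<lambda>x. f (\<theta> x) *\<^sub>R q x + g (\<theta> x) *\<^sub>R h x) has_vector_derivative
           (t + deriv s1 s) *\<^sub>R (g (\<theta> s) *\<^sub>R q s + f (\<theta> s) *\<^sub>R h s)
           + (g (\<theta> s) * deriv s1 s * \<kappa> s) *\<^sub>R a s) (at s)"
proof -
  have f: "(f has_real_derivative g (\<theta> s)) (at (\<theta> s))"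
    and g: "(g has_real_derivative f (\<theta> s)) (at (\<theta> s))"
    using fg unfolding hyperbolic_pair_def by blast+
  have "((\<lambda>x. f (\<theta> x) *\<^sub>R q x + g (\<theta> x) *\<^sub>R h x) has_vector_derivative
          (f (\<theta> s) *\<^sub>R (deriv s1 s *\<^sub>R h s) + (g (\<theta> s) * t) *\<^sub>R q s)
        + (g (\<theta> s) *\<^sub>R (deriv s1 s *\<^sub>R (q s + \<kappa> s *\<^sub>R a s)) + (f (\<theta> s) * t) *\<^sub>R h s)) (at s)"
    using has_vector_derivative_add[OF
        has_vector_derivative_scaleR[OF DERIV_chain2[OF f \<theta>] q_has_derivative[OF s]]
        has_vector_derivative_scaleR[OF DERIV_chain2[OF g \<theta>] frenet_h[rule_format, OF s]]] .
  then show ?thesis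
    by (simp add: algebra_simps)
qed

lemma rotation_vector_derivative_parallel_a:
  assumes fg: "hyperbolic_pair f g" and \<theta>: "(\<theta> has_real_derivative - deriv s1 s) (at s)"
    and e: "\<forall>x\<in>I. e x = f (\<theta> x) *\<^sub>R q x + g (\<theta> x) *\<^sub>R h x" and s: "s \<in> I"
  shows "vector_derivative e (at s) = (g (\<theta> s) * deriv s1 s * \<kappa> s) *\<^sub>R a s"
  using has_vector_derivative_transform_within_open[OF rotation_has_derivative[OF fg \<theta> s] open_I s] e
  by (simp add: vector_derivative_at)

text \<open>Writing \<open>h\<^sup>*\<close> in the frame and comparing it with \<open>a\<close>: the \<open>q\<close>- and \<open>h\<close>-coordinates of
  \<open>q\<^sup>*'\<close> carry the factor \<open>\<theta>' + s\<^sub>1'\<close> and must vanish, its \<open>a\<close>-coordinate must not.\<close>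
lemma mannheim_angle_derivative:
  assumes fg: "hyperbolic_pair f g" and \<theta>: "\<theta> differentiable (at s)"
    and qs: "\<forall>x\<in>I. qs x = f (\<theta> x) *\<^sub>R q x + g (\<theta> x) *\<^sub>R h x"
    and mannheim: "central_normal qs s = a s" and s: "s \<in> I"
  shows "deriv \<theta> s = - deriv s1 s" "g (\<theta> s) * deriv s1 s * \<kappa> s \<noteq> 0"
proof -
  define t where "t = deriv \<theta> s"
  define n where "n = mnorm (vector_derivative qs (at s))"
  define z where "z = g (\<theta> s) * deriv s1 s * \<kappa> s"
  have "(\<theta> has_real_derivative t) (at s)"
    using \<theta> DERIV_deriv_iff_real_differentiable t_def by blast
  from has_vector_derivative_transform_within_open[OF rotation_has_derivative[OF fg this s] open_I s]
  have qs': "vector_derivative qs (at s)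
        = (t + deriv s1 s) *\<^sub>R (g (\<theta> s) *\<^sub>R q s + f (\<theta> s) *\<^sub>R h s) + z *\<^sub>R a s"
    using qs z_def by (simp add: vector_derivative_at)
  have "a s = (1 / n) *\<^sub>R vector_derivative qs (at s)"
    using mannheim unfolding central_normal_def[of qs] n_def by simp
  also have "\<dots> = ((t + deriv s1 s) * g (\<theta> s) / n) *\<^sub>R q s
                 + ((t + deriv s1 s) * f (\<theta> s) / n) *\<^sub>R h s + (z / n) *\<^sub>R a s"
    unfolding qs' by (simp add: algebra_simps add_divide_distrib scaleR_add_left)
  finally have "minner (a s) (q s) = - ((t + deriv s1 s) * g (\<theta> s) / n)"
    and "minner (a s) (h s) = (t + deriv s1 s) * f (\<theta> s) / n"
    and "minner (a s) (a s) = z / n"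
    using frame_coordinates[OF s s s s s s] by metis+
  then have "(t + deriv s1 s) * g (\<theta> s) = 0" "(t + deriv s1 s) * f (\<theta> s) = 0" "z \<noteq> 0"
    using frame_orthonormal[OF s] by auto
  moreover have "(f (\<theta> s))\<^sup>2 \<noteq> (g (\<theta> s))\<^sup>2"
    using fg unfolding hyperbolic_pair_def by blast
  ultimately show "deriv \<theta> s = - deriv s1 s" "g (\<theta> s) * deriv s1 s * \<kappa> s \<noteq> 0"
    unfolding t_def z_def by (auto simp: power2_eq_square)
qed

lemma dparam_offset_a:
  assumes s: "s \<in> I"
  shows "dparam (\<lambda>s. c s + R *\<^sub>R a s) a s = 1 / (deriv s1 s * \<kappa> s)"
proof -
  define k where "k = deriv s1 s * \<kappa> s"
  have a': "vector_derivative a (at s) = (- k) *\<^sub>R h s"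
    using frenet_a[rule_format, OF s] unfolding k_def by (simp add: vector_derivative_at)
  have b': "vector_derivative (\<lambda>s. c s + R *\<^sub>R a s) (at s) = 1 *\<^sub>R q s + (- R * k) *\<^sub>R h s + 0 *\<^sub>R a s"
    using offset_striction_derivative[OF s] unfolding k_def by (simp add: algebra_simps)
  have "det3 (1 *\<^sub>R q s + (- R * k) *\<^sub>R h s + 0 *\<^sub>R a s) (0 *\<^sub>R q s + 0 *\<^sub>R h s + 1 *\<^sub>R a s)
          (0 *\<^sub>R q s + (- k) *\<^sub>R h s + 0 *\<^sub>R a s) = k"
    unfolding det3_frame_combination frame_orthonormal(7)[OF s] by simp
  then have "dparam (\<lambda>s. c s + R *\<^sub>R a s) a s = k / (k * k)"
    unfolding dparam_def a' b' using frame_orthonormal(2)[OF s] by simp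
  then show ?thesis
    unfolding k_def by simp
qed

lemma dparam_offset_parallel_a:
  assumes s: "s \<in> I" and e: "e s = x *\<^sub>R q s + y *\<^sub>R h s"
    and e': "vector_derivative e (at s) = z *\<^sub>R a s"
  shows "dparam (\<lambda>s. c s + R *\<^sub>R a s) e s = (y + R * deriv s1 s * \<kappa> s * x) / z"
proof -
  define k where "k = deriv s1 s * \<kappa> s"
  have b': "vector_derivative (\<lambda>s. c s + R *\<^sub>R a s) (at s) = 1 *\<^sub>R q s + (- R * k) *\<^sub>R h s + 0 *\<^sub>R a s"
    using offset_striction_derivative[OF s] unfolding k_def by (simp add: algebra_simps)
  have "det3 (1 *\<^sub>R q s + (- R * k) *\<^sub>R h s + 0 *\<^sub>R a s) (x *\<^sub>R q s + y *\<^sub>R h s + 0 *\<^sub>R a s)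
          (0 *\<^sub>R q s + 0 *\<^sub>R h s + z *\<^sub>R a s) = z * (y + R * k * x)"
    unfolding det3_frame_combination frame_orthonormal(7)[OF s] by (simp add: algebra_simps)
  moreover have "minner (z *\<^sub>R a s) (z *\<^sub>R a s) = z * z"
    using frame_orthonormal(4)[OF s] by simp
  ultimately have "dparam (\<lambda>s. c s + R *\<^sub>R a s) e s = z * (y + R * k * x) / (z * z)"
    unfolding dparam_def b' e e' using frame_orthonormal(4)[OF s] by simp
  then show ?thesis
    unfolding k_def by (simp add: mult.assoc)
qed

lemma mannheim_offset_trajectories:
  assumes fg: "hyperbolic_pair f g" and \<theta>: "\<theta> differentiable (at s)"
    and qs: "\<forall>x\<in>I. qs x = f (\<theta> x) *\<^sub>R q x + g (\<theta> x) *\<^sub>R h x"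
    and as: "\<forall>x\<in>I. as x = g (\<theta> x) *\<^sub>R q x + f (\<theta> x) *\<^sub>R h x"
    and mannheim: "\<forall>x\<in>I. central_normal qs x = a x"
    and as_nonnull: "minner (vector_derivative as (at s)) (vector_derivative as (at s)) \<noteq> 0"
    and s: "s \<in> I"
  shows "dparam (\<lambda>s. c s + R *\<^sub>R a s) (central_normal qs) s \<noteq> 0"
    and "dparam (\<lambda>s. c s + R *\<^sub>R a s) as s = 0 \<longleftrightarrow>
           f (\<theta> s) + R * deriv s1 s * \<kappa> s * g (\<theta> s) = 0"
proof -
  note angle = mannheim_angle_derivative[OF fg \<theta> qs mannheim[rule_format, OF s] s]
  have "dparam (\<lambda>s. c s + R *\<^sub>R a s) (central_normal qs) s = 1 / (deriv s1 s * \<kappa> s)"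
    using dparam_cong_open[OF open_I s] mannheim dparam_offset_a[OF s] by metis
  then show "dparam (\<lambda>s. c s + R *\<^sub>R a s) (central_normal qs) s \<noteq> 0"
    using angle(2) by simp
  have "(\<theta> has_real_derivative - deriv s1 s) (at s)"
    using angle(1) \<theta> DERIV_deriv_iff_real_differentiable by metis
  then have as': "vector_derivative as (at s) = (f (\<theta> s) * deriv s1 s * \<kappa> s) *\<^sub>R a s"
    using rotation_vector_derivative_parallel_a fg hyperbolic_pair_commute as s by blast
  then have "f (\<theta> s) * deriv s1 s * \<kappa> s \<noteq> 0"
    using as_nonnull by auto
  then show "dparam (\<lambda>s. c s + R *\<^sub>R a s) as s = 0 \<longleftrightarrow>
               f (\<theta> s) + R * deriv s1 s * \<kappa> s * g (\<theta> s) = 0"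
    using dparam_offset_parallel_a[OF s as[rule_format, OF s] as'] by simp
qed

end

theorem corollary5p4:
  fixes I :: "real set"
    and c q qs as :: "real \<Rightarrow> real^3"
    and R :: real
    and \<theta> \<kappa> s1 :: "real \<Rightarrow> real"
  assumes I: "open I" "I \<noteq> {}"
    and phi: "type_M1_minus I c q"
    and dev: "developable_on I c q"
    and orient: "\<forall>s\<in>I. minner (vector_derivative c (at s)) (q s) < 0"
    and s1: "\<forall>s\<in>I. (s1 has_real_derivative mnorm (vector_derivative q (at s))) (at s)"
    and frenet_h: "\<forall>s\<in>I. (central_normal q has_vector_derivative
                      deriv s1 s *\<^sub>R (q s + \<kappa> s *\<^sub>R asymptotic_normal q s)) (at s)"
    and frenet_a: "\<forall>s\<in>I. (asymptotic_normal q has_vector_derivative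
                      deriv s1 s *\<^sub>R (- (\<kappa> s *\<^sub>R central_normal q s))) (at s)"
    and theta: "\<forall>s\<in>I. \<theta> differentiable (at s)"
    and types:
      "(\<forall>s\<in>I. qs s = sinh (\<theta> s) *\<^sub>R q s + cosh (\<theta> s) *\<^sub>R central_normal q s \<and>
               as s = cosh (\<theta> s) *\<^sub>R q s + sinh (\<theta> s) *\<^sub>R central_normal q s)
     \<or> (\<forall>s\<in>I. qs s = cosh (\<theta> s) *\<^sub>R q s + sinh (\<theta> s) *\<^sub>R central_normal q s \<and>
               as s = sinh (\<theta> s) *\<^sub>R q s + cosh (\<theta> s) *\<^sub>R central_normal q s)"
    and mannheim: "\<forall>s\<in>I. central_normal qs s = asymptotic_normal q s"
    and as_nonnull: "\<forall>s\<in>I. minner (vector_derivative as (at s)) (vector_derivative as (at s)) \<noteq> 0"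
  shows
    "\<not> developable_on I (\<lambda>s. c s + R *\<^sub>R asymptotic_normal q s) (central_normal qs) \<and>
     ((\<forall>s\<in>I. qs s = sinh (\<theta> s) *\<^sub>R q s + cosh (\<theta> s) *\<^sub>R central_normal q s \<and>
               as s = cosh (\<theta> s) *\<^sub>R q s + sinh (\<theta> s) *\<^sub>R central_normal q s) \<longrightarrow>
       (developable_on I (\<lambda>s. c s + R *\<^sub>R asymptotic_normal q s) as \<longleftrightarrow>
         (\<forall>s\<in>I. sinh (\<theta> s) + R * deriv s1 s * \<kappa> s * cosh (\<theta> s) = 0))) \<and>
     ((\<forall>s\<in>I. qs s = cosh (\<theta> s) *\<^sub>R q s + sinh (\<theta> s) *\<^sub>R central_normal q s \<and>
               as s = sinh (\<theta> s) *\<^sub>R q s + cosh (\<theta> s) *\<^sub>R central_normal q s) \<longrightarrow>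
       (developable_on I (\<lambda>s. c s + R *\<^sub>R asymptotic_normal q s) as \<longleftrightarrow>
         (\<forall>s\<in>I. cosh (\<theta> s) + R * deriv s1 s * \<kappa> s * sinh (\<theta> s) = 0)))"
proof -
  interpret developable_M1_minus I c q \<kappa> s1
    using I(1) phi dev orient s1 frenet_h frenet_a by unfold_locales
  obtain s0 where s0: "s0 \<in> I"
    using I(2) by blast
  have trajectories:
    "\<not> developable_on I (\<lambda>s. c s + R *\<^sub>R a s) (central_normal qs) \<and>
     (developable_on I (\<lambda>s. c s + R *\<^sub>R a s) as \<longleftrightarrow>
       (\<forall>s\<in>I. f (\<theta> s) + R * deriv s1 s * \<kappa> s * g (\<theta> s) = 0))"
    if fg: "hyperbolic_pair f g"
      and rotation: "\<forall>s\<in>I. qs s = f (\<theta> s) *\<^sub>R q s + g (\<theta> s) *\<^sub>R h s \<and>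
                              as s = g (\<theta> s) *\<^sub>R q s + f (\<theta> s) *\<^sub>R h s"
    for f g
    using mannheim_offset_trajectories[OF fg theta[rule_format] _ _ mannheim as_nonnull[rule_format]]
      rotation s0
    unfolding developable_on_def by blast
  show ?thesis
    using trajectories[OF hyperbolic_pair_sinh_cosh] trajectories[OF hyperbolic_pair_cosh_sinh] types
    by blast
qed

end
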